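(* Let $K\geq 2$ be an integer, let $\mathcal{X}_1,\dots,\mathcal{X}_K$ be Euclidean (finite-dimensional real inner product) spaces with inner products $\langle\cdot,\cdot\rangle_k$ and norms $\Vert\cdot\Vert_k$, and let $X_1,\dots,X_K$ be random variables on a probability space $(\Omega,\mathcal{A},P)$ with $X_k$ valued in $\mathcal{X}_k$, $\mathbb{E}(\Vert X_k\Vert_k^2)<+\infty$ and $\mathbb{E}(X_k)=0$ for every $k$. For $(k,\ell)\in\{1,\dots,K\}^2$ let $V_{k\ell}=\mathbb{E}(X_\ell\otimes X_k)$ and $V_k=V_{kk}$, and assume each $V_k$ is invertible. Let $\mathcal{X}=\mathcal{X}_1\times\cdots\times\mathcal{X}_K$ with inner product $\langle\alpha,\beta\rangle_{\mathcal{X}}=\sum_{k=1}^K\langle\alpha_k,\beta_k\rangle_k$, let $q=\dim\mathcal{X}$, and define the operators on $\mathcal{X}$ \[ \Phi=\sum_{k=1}^K\tau_k^\ast V_k\tau_k,\qquad \Psi=\sum_{k=1}^K\sum_{\ell=1,\ \ell\neq k}^K\tau_k^\ast V_{k\ell}\tau_\ell,\qquad T=\Phi^{-1/2}\Psi\Phi^{-1/2}. \] Let $\rho_1\geq\rho_2\geq\cdots\geq\rho_q$ be the eigenvalues of the self-adjoint operator $T$ (counted with multiplicity). Then: (i) for every $j\in\{1,\dots,q\}$, $-1\leq\rho_j\leq K(K-1)$; (ii) $\rho_j=0$ for all $j\in\{1,\dots,q\}$ if and only if $V_{k\ell}=0$ for all $(k,\ell)\in\{1,\dots,K\}^2$ with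 $k\neq\ell$.
   Context: For vectors $x,y$ in Euclidean spaces, $x\otimes y$ denotes the linear map $h\mapsto\langle x,h\rangle y$, so $V_{k\ell}=\mathbb{E}(X_\ell\otimes X_k)$ is a linear map from $\mathcal{X}_\ell$ to $\mathcal{X}_k$ with $\langle a,V_{k\ell}b\rangle_k=\mathbb{E}(\langle a,X_k\rangle_k\langle b,X_\ell\rangle_\ell)$. $\tau_k:\mathcal{X}\to\mathcal{X}_k$ is the canonical projection $\alpha\mapsto\alpha_k$, and its adjoint $\tau_k^\ast:\mathcal{X}_k\to\mathcal{X}$ maps $t$ to the element of $\mathcal{X}$ whose $k$-th component is $t$ and all other components are $0$. $\Phi$ is self-adjoint, positive and invertible, and $\Phi^{-1/2}=\sum_k\tau_k^\ast V_k^{-1/2}\tau_k$. The $\rho_j$ are called the canonical coefficients of the multiple-set linear canonical analysis of $(X_1,\dots,X_K)$. *)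

theory Defs
  imports "HOL-Probability.Probability" "Jordan_Normal_Form.Matrix" "Jordan_Normal_Form.Char_Poly"
begin

text \<open>Each Euclidean space X_k is identified (via an orthonormal basis) with R^(d k)
  carrying the standard inner product; indices k range over {1..K}.\<close>

definition msum :: "nat \<Rightarrow> nat \<Rightarrow> ('i \<Rightarrow> real mat) \<Rightarrow> 'i set \<Rightarrow> real mat" where
  "msum n m F I = mat n m (\<lambda>(i,j). \<Sum>k\<in>I. F k $$ (i,j))"

definition blk_offset :: "(nat \<Rightarrow> nat) \<Rightarrow> nat \<Rightarrow> nat" where
  "blk_offset d k = (\<Sum>m\<in>{1..<k}. d m)"

definition qdim :: "(nat \<Rightarrow> nat) \<Rightarrow> nat \<Rightarrow> nat" where
  "qdim d K = (\<Sum>k\<in>{1..K}. d k)"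

definition tau :: "(nat \<Rightarrow> nat) \<Rightarrow> nat \<Rightarrow> nat \<Rightarrow> real mat" where
  "tau d K k = mat (d k) (qdim d K) (\<lambda>(i,p). if p = blk_offset d k + i then 1 else 0)"

text \<open>cross-covariance V_{kl} = E(X_l \<otimes> X_k), a (d k) x (d l) matrix:
  entry (i,j) is E(X_k,i X_l,j)\<close>
definition covop :: "'a measure \<Rightarrow> (nat \<Rightarrow> 'a \<Rightarrow> nat \<Rightarrow> real) \<Rightarrow> (nat \<Rightarrow> nat) \<Rightarrow> nat \<Rightarrow> nat \<Rightarrow> real mat" where
  "covop M X d k l = mat (d k) (d l) (\<lambda>(i,j). prob_space.expectation M (\<lambda>\<omega>. X k \<omega> i * X l \<omega> j))"

definition Phi_op where
  "Phi_op M X d K = msum (qdim d K) (qdim d K)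
     (\<lambda>k. transpose_mat (tau d K k) * covop M X d k k * tau d K k) {1..K}"

definition Psi_op where
  "Psi_op M X d K = msum (qdim d K) (qdim d K)
     (\<lambda>k. msum (qdim d K) (qdim d K)
        (\<lambda>l. transpose_mat (tau d K k) * covop M X d k l * tau d K l) ({1..K} - {k})) {1..K}"

definition pd_mat :: "nat \<Rightarrow> real mat \<Rightarrow> bool" where
  "pd_mat n S \<longleftrightarrow> S \<in> carrier_mat n n \<and> transpose_mat S = S \<and>
     (\<forall>v\<in>carrier_vec n. v \<noteq> 0\<^sub>v n \<longrightarrow> v \<bullet> (S *\<^sub>v v) > 0)"

definition inv_sqrt_mat :: "nat \<Rightarrow> real mat \<Rightarrow> real mat" where
  "inv_sqrt_mat n A = (THE S. pd_mat n S \<and> S * S * A = 1\<^sub>m n)"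

definition T_op where
  "T_op M X d K = inv_sqrt_mat (qdim d K) (Phi_op M X d K) * Psi_op M X d K
                  * inv_sqrt_mat (qdim d K) (Phi_op M X d K)"

end

theory Submission
  imports Defs "Jordan_Normal_Form.Spectral_Radius"
begin

(* If v is an eigenvector of T = \<Phi>^(-1/2) \<Psi> \<Phi>^(-1/2) for the eigenvalue \<rho>, then w = \<Phi>^(-1/2) v
   satisfies <w, \<Psi> w> = \<rho> <w, \<Phi> w> with <w, \<Phi> w> = |v|^2 > 0. Both quadratic forms are second moments
   of the real random variables Y_k = <w_k, X_k>: <w, \<Phi> w> = \<Sum>_k E(Y_k^2) and
   <w, (\<Phi> + \<Psi>) w> = E((\<Sum>_k Y_k)^2), which lies between 0 and K \<Sum>_k E(Y_k^2) by Cauchy-Schwarz.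
   Hence 0 <= 1 + \<rho> <= K, which is sharper than the stated bound \<rho> <= K (K - 1).
   For (ii), T is symmetric, so its eigenvalues all vanish iff T = 0, iff \<Psi> = 0 (as \<Phi>^(-1/2) is
   invertible), iff the cross-covariances V_kl with k \<noteq> l, which are the blocks of \<Psi>, all vanish.
   The spectral theorem for real symmetric matrices, obtained by Householder deflation, supplies both
   \<Phi>^(-1/2) and the fact that a symmetric matrix without nonzero eigenvalues is zero. *)

section \<open>Real symmetric matrices\<close>

lemma vec_nonzero_index:
  fixes v :: "'a :: zero vec"
  assumes "v \<in> carrier_vec n" "v \<noteq> 0\<^sub>v n"
  obtains i where "i < n" "v $ i \<noteq> 0"
  using assms by (metis eq_vecI carrier_vecD index_zero_vec)

lemma scalar_prod_self_pos:
  fixes v :: "real vec"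
  assumes "v \<in> carrier_vec n" "v \<noteq> 0\<^sub>v n"
  shows "v \<bullet> v > 0"
  using conjugate_square_greater_0_vec[OF assms(1)] assms(2) by simp

lemma scalar_prod_self_nonneg:
  fixes v :: "real vec"
  shows "v \<bullet> v \<ge> 0"
  unfolding scalar_prod_def by (intro sum_nonneg) auto

lemma symmetric_mat_scalar_prod:
  fixes A :: "'a :: comm_semiring_0 mat"
  assumes A: "A \<in> carrier_mat n n" "A\<^sup>T = A" and x: "x \<in> carrier_vec n" and y: "y \<in> carrier_vec n"
  shows "x \<bullet> (A *\<^sub>v y) = (A *\<^sub>v x) \<bullet> y"
  using transpose_vec_mult_scalar[OF A(1) y x] A(2) by simp

lemma transpose_mult_mult:
  fixes A B C :: "'a :: comm_ring_1 mat"
  assumes "A \<in> carrier_mat n n" "B \<in> carrier_mat n n" "C \<in> carrier_mat n n"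
  shows "(A * B * C)\<^sup>T = C\<^sup>T * B\<^sup>T * A\<^sup>T"
proof -
  have "(A * B * C)\<^sup>T = C\<^sup>T * (A * B)\<^sup>T" using assms by (intro transpose_mult) auto
  also have "\<dots> = C\<^sup>T * (B\<^sup>T * A\<^sup>T)" using assms by (simp add: transpose_mult)
  finally show ?thesis using assms by (simp add: assoc_mult_mat[of _ n n _ n _ n])
qed

lemma mult_mat_vec_unit_vec:
  fixes C :: "'a :: semiring_1 mat"
  assumes "C \<in> carrier_mat n m" "i < n" "j < m"
  shows "(C *\<^sub>v unit_vec m j) $ i = C $$ (i, j)"
  using assms by (simp add: scalar_prod_right_unit)

lemma symmetric_mat_index:
  assumes "A \<in> carrier_mat n n" "A\<^sup>T = A" "i < n" "j < n"
  shows "A $$ (j, i) = A $$ (i, j)"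
  using assms by (metis carrier_matD index_transpose_mat(1))

(* a and b are the real and imaginary parts of a complex eigenvector of A for the eigenvalue r + i s *)
lemma symmetric_mat_rotation_part_zero:
  fixes A :: "real mat"
  assumes A: "A \<in> carrier_mat n n" "A\<^sup>T = A" and a: "a \<in> carrier_vec n" and b: "b \<in> carrier_vec n"
    and Aa: "A *\<^sub>v a = r \<cdot>\<^sub>v a - s \<cdot>\<^sub>v b" and Ab: "A *\<^sub>v b = r \<cdot>\<^sub>v b + s \<cdot>\<^sub>v a"
    and nonzero: "a \<noteq> 0\<^sub>v n \<or> b \<noteq> 0\<^sub>v n"
  shows "s = 0"
proof -
  have "b \<bullet> (A *\<^sub>v a) = a \<bullet> (A *\<^sub>v b)"
    using symmetric_mat_scalar_prod[OF A b a] comm_scalar_prod[OF _ a, of "A *\<^sub>v b"] A b by simp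
  hence "s * (a \<bullet> a + b \<bullet> b) = 0"
    unfolding Aa Ab using a b
    by (simp add: scalar_prod_minus_distrib scalar_prod_add_distrib[of _ n] comm_scalar_prod[of a n b]
        algebra_simps)
  moreover have "a \<bullet> a + b \<bullet> b > 0"
    using nonzero scalar_prod_self_pos[OF a] scalar_prod_self_pos[OF b] scalar_prod_self_nonneg[of a]
      scalar_prod_self_nonneg[of b] by (auto simp: add_pos_nonneg add_nonneg_pos)
  ultimately show ?thesis by simp
qed

lemma symmetric_mat_real_eigenvector:
  fixes A :: "real mat"
  assumes A: "A \<in> carrier_mat n n" "A\<^sup>T = A" and n: "0 < n"
  obtains r v where "v \<in> carrier_vec n" "v \<noteq> 0\<^sub>v n" "A *\<^sub>v v = r \<cdot>\<^sub>v v"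
proof -
  define Ac where "Ac = map_mat complex_of_real A"
  have Ac: "Ac \<in> carrier_mat n n" using A unfolding Ac_def by auto
  obtain \<mu> v where v: "v \<in> carrier_vec n" "v \<noteq> 0\<^sub>v n" "Ac *\<^sub>v v = \<mu> \<cdot>\<^sub>v v"
    using spectrum_non_empty[OF Ac n] Ac unfolding spectrum_def eigenvalue_def eigenvector_def by auto
  define a where "a = map_vec Re v"
  define b where "b = map_vec Im v"
  have a: "a \<in> carrier_vec n" and b: "b \<in> carrier_vec n" using v unfolding a_def b_def by auto
  have row: "(Ac *\<^sub>v v) $ i = (\<Sum>j<n. complex_of_real (A $$ (i,j)) * v $ j)" if "i < n" for i
    using that v(1) A unfolding Ac_def by (simp add: scalar_prod_def lessThan_atLeast0)
  have Aa: "A *\<^sub>v a = Re \<mu> \<cdot>\<^sub>v a - Im \<mu> \<cdot>\<^sub>v b"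
  proof (rule eq_vecI)
    fix i assume "i < dim_vec (Re \<mu> \<cdot>\<^sub>v a - Im \<mu> \<cdot>\<^sub>v b)"
    hence i: "i < n" using a b by simp
    have "Re ((Ac *\<^sub>v v) $ i) = Re ((\<mu> \<cdot>\<^sub>v v) $ i)" using v(3) by simp
    thus "(A *\<^sub>v a) $ i = (Re \<mu> \<cdot>\<^sub>v a - Im \<mu> \<cdot>\<^sub>v b) $ i"
      using i v A a b unfolding row[OF i] by (simp add: a_def b_def scalar_prod_def lessThan_atLeast0 Re_sum)
  qed (use A a b in simp)
  have Ab: "A *\<^sub>v b = Re \<mu> \<cdot>\<^sub>v b + Im \<mu> \<cdot>\<^sub>v a"
  proof (rule eq_vecI)
    fix i assume "i < dim_vec (Re \<mu> \<cdot>\<^sub>v b + Im \<mu> \<cdot>\<^sub>v a)"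
    hence i: "i < n" using a b by simp
    have "Im ((Ac *\<^sub>v v) $ i) = Im ((\<mu> \<cdot>\<^sub>v v) $ i)" using v(3) by simp
    thus "(A *\<^sub>v b) $ i = (Re \<mu> \<cdot>\<^sub>v b + Im \<mu> \<cdot>\<^sub>v a) $ i"
      using i v A a b unfolding row[OF i]
      by (simp add: a_def b_def scalar_prod_def lessThan_atLeast0 Im_sum algebra_simps)
  qed (use A a b in simp)
  have nonzero: "a \<noteq> 0\<^sub>v n \<or> b \<noteq> 0\<^sub>v n"
  proof -
    obtain i where "i < n" "v $ i \<noteq> 0" using vec_nonzero_index[OF v(1,2)] .
    thus ?thesis
      using v(1) unfolding a_def b_def by (auto dest!: arg_cong[where f = "\<lambda>w. w $ i"] simp: complex_eq_iff)
  qed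
  have "Im \<mu> = 0" by (rule symmetric_mat_rotation_part_zero[OF A a b Aa Ab nonzero])
  hence "A *\<^sub>v a = Re \<mu> \<cdot>\<^sub>v a" "A *\<^sub>v b = Re \<mu> \<cdot>\<^sub>v b" using Aa Ab a b by auto
  thus thesis using nonzero that[OF a] that[OF b] by blast
qed

definition householder_mat :: "nat \<Rightarrow> real vec \<Rightarrow> real mat" where
  "householder_mat n u = mat n n (\<lambda>(i,j). of_bool (i = j) - 2 / (u \<bullet> u) * u $ i * u $ j)"

lemma householder_mat_carrier: "householder_mat n u \<in> carrier_mat n n"
  unfolding householder_mat_def by simp

lemma householder_mat_symmetric: "(householder_mat n u)\<^sup>T = householder_mat n u"
  unfolding householder_mat_def by (intro eq_matI) auto

lemma householder_mat_involution:
  assumes u: "u \<in> carrier_vec n"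
  shows "householder_mat n u * householder_mat n u = 1\<^sub>m n"
proof (rule eq_matI)
  fix i j assume "i < dim_row (1\<^sub>m n)" "j < dim_col (1\<^sub>m n)"
  hence ij: "i < n" "j < n" by auto
  define c where "c = 2 / (u \<bullet> u)"
  \<comment> \<open>also when \<open>u = 0\<close>, where \<open>c = 0\<close> by the convention \<open>x / 0 = 0\<close>\<close>
  have c: "c * c * (u \<bullet> u) = 2 * c" unfolding c_def by (cases "u \<bullet> u = 0") auto
  have uu: "u \<bullet> u = (\<Sum>k<n. (u $ k)^2)"
    using u by (simp add: scalar_prod_def lessThan_atLeast0 power2_eq_square)
  have "(householder_mat n u * householder_mat n u) $$ (i,j)
      = (\<Sum>k<n. (of_bool (i = k) - c * u $ i * u $ k) * (of_bool (k = j) - c * u $ k * u $ j))"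
    using ij unfolding householder_mat_def c_def by (simp add: scalar_prod_def lessThan_atLeast0)
  also have "\<dots> = (\<Sum>k<n. (if k = i then of_bool (i = j) else 0) - (if k = i then c * u $ k * u $ j else 0)
      - (if k = j then c * u $ i * u $ k else 0) + c * c * u $ i * u $ j * (u $ k)^2)"
    by (intro sum.cong refl) (auto simp: algebra_simps power2_eq_square)
  also have "\<dots> = of_bool (i = j) - 2 * (c * u $ i * u $ j) + c * c * u $ i * u $ j * (u \<bullet> u)"
    using ij unfolding uu by (simp add: sum.distrib sum_subtractf sum_distrib_left[symmetric])
  also have "c * c * u $ i * u $ j * (u \<bullet> u) = (c * c * (u \<bullet> u)) * (u $ i * u $ j)"
    by (simp only: ac_simps)
  also have "of_bool (i = j) - 2 * (c * u $ i * u $ j) + \<dots> = 1\<^sub>m n $$ (i,j)"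
    using ij unfolding c by simp
  finally show "(householder_mat n u * householder_mat n u) $$ (i,j) = 1\<^sub>m n $$ (i,j)" .
qed (auto simp: householder_mat_def)

lemma householder_mat_first_column:
  fixes v :: "real vec"
  assumes v: "v \<in> carrier_vec n" "v \<bullet> v = 1" and i: "i < n"
  shows "householder_mat n (v - unit_vec n 0) $$ (i, 0) = v $ i"
proof -
  define u where "u = v - unit_vec n 0"
  have u: "u \<in> carrier_vec n" unfolding u_def using v by simp
  have n: "0 < n" using i by simp
  have uu: "u \<bullet> u = 2 * (1 - v $ 0)"
    unfolding u_def using v n
    by (simp add: minus_scalar_prod_distrib scalar_prod_minus_distrib comm_scalar_prod[of "unit_vec n 0" n v])
  have u0: "u $ 0 = v $ 0 - 1" and ui: "u $ i = v $ i - of_bool (i = 0)"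
    unfolding u_def using v i n by auto
  have "householder_mat n u $$ (i, 0) = of_bool (i = 0) - 2 / (u \<bullet> u) * u $ i * u $ 0"
    using i n unfolding householder_mat_def by simp
  also have "\<dots> = of_bool (i = 0) + u $ i"
  proof (cases "v $ 0 = 1")
    case True
    hence "u = 0\<^sub>v n" using uu scalar_prod_self_pos[OF u] by fastforce
    thus ?thesis using i by simp
  next
    case False
    thus ?thesis unfolding uu u0 by (simp add: field_simps)
  qed
  finally show ?thesis unfolding u_def[symmetric] ui by simp
qed

lemma symmetric_mat_first_column_block:
  fixes C :: "real mat"
  assumes C: "C \<in> carrier_mat (Suc n) (Suc n)" "C\<^sup>T = C"
    and col: "\<And>i. i < Suc n \<Longrightarrow> C $$ (i, 0) = (if i = 0 then l else 0)"
  shows "C = four_block_mat (mat 1 1 (\<lambda>_. l)) (0\<^sub>m 1 n) (0\<^sub>m n 1) (mat n n (\<lambda>(i,j). C $$ (Suc i, Suc j)))"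
proof (rule eq_matI)
  have row: "C $$ (0, j) = (if j = 0 then l else 0)" if "j < Suc n" for j
    using col[OF that] symmetric_mat_index[OF C that zero_less_Suc] by simp
  fix i j assume "i < dim_row (four_block_mat (mat 1 1 (\<lambda>_. l)) (0\<^sub>m 1 n) (0\<^sub>m n 1) (mat n n (\<lambda>(i,j). C $$ (Suc i, Suc j))))"
    "j < dim_col (four_block_mat (mat 1 1 (\<lambda>_. l)) (0\<^sub>m 1 n) (0\<^sub>m n 1) (mat n n (\<lambda>(i,j). C $$ (Suc i, Suc j))))"
  thus "C $$ (i, j) = four_block_mat (mat 1 1 (\<lambda>_. l)) (0\<^sub>m 1 n) (0\<^sub>m n 1) (mat n n (\<lambda>(i,j). C $$ (Suc i, Suc j))) $$ (i, j)"
    using col row by (cases i; cases j) auto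
qed (use C in auto)

lemma symmetric_mat_unit_eigenvector:
  fixes A :: "real mat"
  assumes A: "A \<in> carrier_mat n n" "A\<^sup>T = A" and n: "0 < n"
  obtains l and v :: "real vec" where "v \<in> carrier_vec n" "v \<bullet> v = 1" "A *\<^sub>v v = l \<cdot>\<^sub>v v"
proof -
  obtain l v where v: "v \<in> carrier_vec n" "v \<noteq> 0\<^sub>v n" "A *\<^sub>v v = l \<cdot>\<^sub>v v"
    by (rule symmetric_mat_real_eigenvector[OF A n])
  define c where "c = 1 / sqrt (v \<bullet> v)"
  have "(c \<cdot>\<^sub>v v) \<bullet> (c \<cdot>\<^sub>v v) = 1"
    unfolding c_def using v(1) scalar_prod_self_pos[OF v(1,2)] by simp
  moreover have "A *\<^sub>v (c \<cdot>\<^sub>v v) = l \<cdot>\<^sub>v (c \<cdot>\<^sub>v v)"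
    using v A by (simp add: mult_mat_vec smult_smult_assoc mult.commute)
  ultimately show thesis using that[of "c \<cdot>\<^sub>v v"] v(1) by simp
qed

lemma symmetric_mat_deflation:
  fixes A :: "real mat"
  assumes A: "A \<in> carrier_mat (Suc n) (Suc n)" "A\<^sup>T = A"
  obtains H l B where "H \<in> carrier_mat (Suc n) (Suc n)" "H\<^sup>T = H" "H * H = 1\<^sub>m (Suc n)"
    "B \<in> carrier_mat n n" "B\<^sup>T = B"
    "H * A * H = four_block_mat (mat 1 1 (\<lambda>_. l)) (0\<^sub>m 1 n) (0\<^sub>m n 1) B"
proof -
  obtain l and v :: "real vec" where v: "v \<in> carrier_vec (Suc n)" "v \<bullet> v = 1" and Av: "A *\<^sub>v v = l \<cdot>\<^sub>v v"
    by (rule symmetric_mat_unit_eigenvector[OF A zero_less_Suc])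
  \<comment> \<open>the reflection exchanging \<open>e\<^sub>0\<close> and \<open>v\<close>, so that \<open>e\<^sub>0\<close> is an eigenvector of \<open>H A H\<close>\<close>
  define H where "H = householder_mat (Suc n) (v - unit_vec (Suc n) 0)"
  have H: "H \<in> carrier_mat (Suc n) (Suc n)" "H\<^sup>T = H" "H * H = 1\<^sub>m (Suc n)"
    unfolding H_def using v
    by (auto simp: householder_mat_carrier householder_mat_symmetric householder_mat_involution)
  define e :: "real vec" where "e = unit_vec (Suc n) 0"
  have e: "e \<in> carrier_vec (Suc n)" unfolding e_def by simp
  have He: "H *\<^sub>v e = v"
    by (rule eq_vecI) (use H v householder_mat_first_column[OF v] in \<open>auto simp: e_def H_def\<close>)
  have Hv: "H *\<^sub>v v = e"
    using assoc_mult_mat_vec[OF H(1) H(1) e] H(3) e unfolding He by simp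
  have C: "H * A * H \<in> carrier_mat (Suc n) (Suc n)" "(H * A * H)\<^sup>T = H * A * H"
    using H A transpose_mult_mult[OF H(1) A(1) H(1)] by auto
  have "(H * A * H) *\<^sub>v e = (H * A) *\<^sub>v (H *\<^sub>v e)"
    by (rule assoc_mult_mat_vec) (use H(1) A(1) e in auto)
  also have "\<dots> = H *\<^sub>v (A *\<^sub>v (H *\<^sub>v e))"
    by (rule assoc_mult_mat_vec) (use H(1) A(1) e in auto)
  also have "\<dots> = l \<cdot>\<^sub>v e" unfolding He Av using H(1) v by (simp add: mult_mat_vec Hv)
  finally have "(H * A * H) *\<^sub>v e = l \<cdot>\<^sub>v e" .
  hence col: "(H * A * H) $$ (i, 0) = (if i = 0 then l else 0)" if "i < Suc n" for i
    using mult_mat_vec_unit_vec[OF C(1) that zero_less_Suc] that unfolding e_def by (cases "i = 0") simp_all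
  define B where "B = mat n n (\<lambda>(i,j). (H * A * H) $$ (Suc i, Suc j))"
  have "B\<^sup>T = B"
    unfolding B_def using symmetric_mat_index[OF C] by (intro eq_matI) auto
  thus thesis using that[OF H _ _ symmetric_mat_first_column_block[OF C col]] unfolding B_def by simp
qed

lemma orthogonal_diagonalization_extend:
  fixes U' D' :: "real mat" and l :: real
  assumes U': "U' \<in> carrier_mat n n" "U'\<^sup>T * U' = 1\<^sub>m n" and D': "D' \<in> carrier_mat n n" "diagonal_mat D'"
  obtains F D where "F \<in> carrier_mat (Suc n) (Suc n)" "F\<^sup>T * F = 1\<^sub>m (Suc n)"
    "D \<in> carrier_mat (Suc n) (Suc n)" "diagonal_mat D"
    "F * D * F\<^sup>T = four_block_mat (mat 1 1 (\<lambda>_. l)) (0\<^sub>m 1 n) (0\<^sub>m n 1) (U' * D' * U'\<^sup>T)"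
proof -
  define L :: "real mat" where "L = mat 1 1 (\<lambda>_. l)"
  define F where "F = four_block_mat (1\<^sub>m 1) (0\<^sub>m 1 n) (0\<^sub>m n 1) U'"
  define D where "D = four_block_mat L (0\<^sub>m 1 n) (0\<^sub>m n 1) D'"
  have L: "L \<in> carrier_mat 1 1" unfolding L_def by simp
  have FT: "F\<^sup>T = four_block_mat (1\<^sub>m 1) (0\<^sub>m 1 n) (0\<^sub>m n 1) U'\<^sup>T"
    unfolding F_def using U' by (simp add: transpose_four_block_mat[of _ 1 1 _ n _ n])
  have "F\<^sup>T * F = 1\<^sub>m (Suc n)"
    unfolding FT unfolding F_def using U'
    by (simp add: mult_four_block_mat[of _ 1 1 _ n _ n _ _ 1 _ n] four_block_one_mat[of 1 n, simplified])
  moreover have "F * D = four_block_mat L (0\<^sub>m 1 n) (0\<^sub>m n 1) (U' * D')"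
    unfolding F_def D_def using U' D' L by (simp add: mult_four_block_mat[of _ 1 1 _ n _ n _ _ 1 _ n])
  hence "F * D * F\<^sup>T = four_block_mat L (0\<^sub>m 1 n) (0\<^sub>m n 1) (U' * D' * U'\<^sup>T)"
    unfolding FT using U' D' L by (simp add: mult_four_block_mat[of _ 1 1 _ n _ n _ _ 1 _ n])
  moreover have "diagonal_mat D"
    using D' unfolding D_def L_def diagonal_mat_def by (auto simp: less_Suc_eq_0_disj, force)
  moreover have "F \<in> carrier_mat (Suc n) (Suc n)" "D \<in> carrier_mat (Suc n) (Suc n)"
    unfolding F_def D_def using U' D' L by auto
  ultimately show thesis using that unfolding L_def by blast
qed

lemma real_symmetric_mat_diagonalization:
  fixes A :: "real mat"
  assumes "A \<in> carrier_mat n n" "A\<^sup>T = A"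
  shows "\<exists>U D. U \<in> carrier_mat n n \<and> D \<in> carrier_mat n n \<and> U\<^sup>T * U = 1\<^sub>m n \<and> diagonal_mat D
     \<and> A = U * D * U\<^sup>T"
  using assms
proof (induction n arbitrary: A)
  case 0
  show ?case
    by (rule exI[of _ "1\<^sub>m 0"], rule exI[of _ "1\<^sub>m 0"]) (use 0 in \<open>auto intro!: eq_matI simp: diagonal_mat_def\<close>)
next
  case (Suc n)
  obtain H l B where H: "H \<in> carrier_mat (Suc n) (Suc n)" "H\<^sup>T = H" "H * H = 1\<^sub>m (Suc n)"
    and B: "B \<in> carrier_mat n n" "B\<^sup>T = B"
    and HAH: "H * A * H = four_block_mat (mat 1 1 (\<lambda>_. l)) (0\<^sub>m 1 n) (0\<^sub>m n 1) B"
    by (rule symmetric_mat_deflation[OF Suc.prems])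
  obtain U' D' where U': "U' \<in> carrier_mat n n" "U'\<^sup>T * U' = 1\<^sub>m n" and D': "D' \<in> carrier_mat n n" "diagonal_mat D'"
    and B_eq: "B = U' * D' * U'\<^sup>T"
    using Suc.IH[OF B] by blast
  obtain F D where F: "F \<in> carrier_mat (Suc n) (Suc n)" "F\<^sup>T * F = 1\<^sub>m (Suc n)"
    and D: "D \<in> carrier_mat (Suc n) (Suc n)" "diagonal_mat D"
    and FDF': "F * D * F\<^sup>T = four_block_mat (mat 1 1 (\<lambda>_. l)) (0\<^sub>m 1 n) (0\<^sub>m n 1) (U' * D' * U'\<^sup>T)"
    by (rule orthogonal_diagonalization_extend[OF U' D'])
  have FDF: "F * D * F\<^sup>T = H * A * H" unfolding HAH B_eq by (fact FDF')
  have HHX: "H * (H * X) = X" if "X \<in> carrier_mat (Suc n) k" for X k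
    using assoc_mult_mat[OF H(1) H(1) that] H(3) that by simp
  have "(H * F)\<^sup>T * (H * F) = 1\<^sub>m (Suc n)"
    using H F HHX by (simp add: transpose_mult[of _ "Suc n"] assoc_mult_mat[of _ "Suc n" "Suc n" _ "Suc n" _ "Suc n"])
  moreover have "(H * F) * D * (H * F)\<^sup>T = H * ((H * A * H) * H)"
    unfolding FDF[symmetric] using H F D
    by (simp add: transpose_mult[of _ "Suc n"] assoc_mult_mat[of _ "Suc n" "Suc n" _ "Suc n" _ "Suc n"])
  moreover have "H * ((H * A * H) * H) = A"
    using H Suc.prems HHX by (simp add: assoc_mult_mat[of _ "Suc n" "Suc n" _ "Suc n" _ "Suc n"])
  moreover have "H * F \<in> carrier_mat (Suc n) (Suc n)" using H F by simp
  ultimately show ?case using D by metis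
qed

lemma invertible_mat_mult_vec_eq_zero:
  fixes A :: "'a :: comm_ring_1 mat"
  assumes inv: "invertible_mat A" and A: "A \<in> carrier_mat n n" and z: "z \<in> carrier_vec n"
    and Az: "A *\<^sub>v z = 0\<^sub>v n"
  shows "z = 0\<^sub>v n"
proof -
  obtain B where B: "B \<in> carrier_mat n n" "B * A = 1\<^sub>m n"
    using inv A unfolding invertible_mat_def inverts_mat_def
    by (metis carrier_matD carrier_matI index_mult_mat(3) index_one_mat(3))
  have "z = (B * A) *\<^sub>v z" using B z by simp
  also have "\<dots> = B *\<^sub>v (A *\<^sub>v z)" by (rule assoc_mult_mat_vec[OF B(1) A z])
  also have "\<dots> = 0\<^sub>v n" unfolding Az using B by auto
  finally show ?thesis .
qed

lemma orthogonal_mat_mult_transpose: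
  fixes U :: "real mat"
  assumes "U \<in> carrier_mat n n" "U\<^sup>T * U = 1\<^sub>m n"
  shows "U * U\<^sup>T = 1\<^sub>m n"
  using mat_mult_left_right_inverse[of "U\<^sup>T" n U] assms by simp

lemma diagonalization_eigenvector:
  fixes A U D :: "real mat"
  assumes U: "U \<in> carrier_mat n n" "U\<^sup>T * U = 1\<^sub>m n" and D: "D \<in> carrier_mat n n" "diagonal_mat D"
    and A: "A = U * D * U\<^sup>T" and i: "i < n"
  shows "eigenvector A (U *\<^sub>v unit_vec n i) (D $$ (i,i))"
proof -
  define e :: "real vec" where "e = unit_vec n i"
  have e: "e \<in> carrier_vec n" unfolding e_def by simp
  have UTU: "U\<^sup>T *\<^sub>v (U *\<^sub>v e) = e"
    using assoc_mult_mat_vec[of "U\<^sup>T" n n U n e] U e by simp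
  have De: "D *\<^sub>v e = D $$ (i,i) \<cdot>\<^sub>v e"
    by (rule eq_vecI) (use D i in \<open>auto simp: e_def diagonal_mat_def\<close>)
  have "A *\<^sub>v (U *\<^sub>v e) = U *\<^sub>v (D *\<^sub>v (U\<^sup>T *\<^sub>v (U *\<^sub>v e)))"
    unfolding A using U D e by (simp add: assoc_mult_mat_vec[of _ n n _ n])
  also have "\<dots> = D $$ (i,i) \<cdot>\<^sub>v (U *\<^sub>v e)" unfolding UTU De using U e by (simp add: mult_mat_vec)
  finally have "A *\<^sub>v (U *\<^sub>v e) = D $$ (i,i) \<cdot>\<^sub>v (U *\<^sub>v e)" .
  moreover have "U *\<^sub>v e \<noteq> 0\<^sub>v n"
  proof
    assume "U *\<^sub>v e = 0\<^sub>v n"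
    hence "e = U\<^sup>T *\<^sub>v 0\<^sub>v n" using UTU by simp
    hence "e = 0\<^sub>v n" using U by auto
    thus False using i unfolding e_def by (metis index_unit_vec(1) index_zero_vec(1) zero_neq_one)
  qed
  ultimately show ?thesis unfolding eigenvector_def e_def using A U D by simp
qed

lemma symmetric_mat_eq_zero_iff_eigenvalues_zero:
  fixes A :: "real mat"
  assumes A: "A \<in> carrier_mat n n" "A\<^sup>T = A"
  shows "A = 0\<^sub>m n n \<longleftrightarrow> (\<forall>r. eigenvalue A r \<longrightarrow> r = 0)"
proof
  assume A0: "A = 0\<^sub>m n n"
  show "\<forall>r. eigenvalue A r \<longrightarrow> r = 0"
  proof (intro allI impI)
    fix r assume "eigenvalue A r"
    then obtain v where v: "v \<in> carrier_vec n" "v \<noteq> 0\<^sub>v n" "A *\<^sub>v v = r \<cdot>\<^sub>v v"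
      using A unfolding eigenvalue_def eigenvector_def by auto
    obtain i where i: "i < n" "v $ i \<noteq> 0" using vec_nonzero_index[OF v(1,2)] .
    have "r * v $ i = (A *\<^sub>v v) $ i" using v(3) i v(1) by simp
    also have "\<dots> = 0" using A0 i v(1) by simp
    finally show "r = 0" using i by simp
  qed
next
  assume zero: "\<forall>r. eigenvalue A r \<longrightarrow> r = 0"
  obtain U D where U: "U \<in> carrier_mat n n" "U\<^sup>T * U = 1\<^sub>m n" and D: "D \<in> carrier_mat n n" "diagonal_mat D"
    and UDU: "A = U * D * U\<^sup>T"
    using real_symmetric_mat_diagonalization[OF A] by blast
  have "D $$ (i,i) = 0" if "i < n" for i
    using zero diagonalization_eigenvector[OF U D UDU that] unfolding eigenvalue_def by blast
  hence "D = 0\<^sub>m n n" using D by (intro eq_matI) (auto simp: diagonal_mat_def)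
  thus "A = 0\<^sub>m n n" using U UDU by simp
qed

section \<open>Inverse square roots of positive definite matrices\<close>

definition diag_mat_fun :: "nat \<Rightarrow> (nat \<Rightarrow> 'a :: zero) \<Rightarrow> 'a mat" where
  "diag_mat_fun n f = mat n n (\<lambda>(i,j). if i = j then f i else 0)"

lemma diag_mat_fun_carrier: "diag_mat_fun n f \<in> carrier_mat n n"
  unfolding diag_mat_fun_def by simp

lemma diag_mat_fun_mult:
  "diag_mat_fun n f * diag_mat_fun n g = diag_mat_fun n (\<lambda>i. f i * g i :: 'a :: semiring_0)"
proof (rule eq_matI)
  fix i j assume "i < dim_row (diag_mat_fun n (\<lambda>i. f i * g i))" "j < dim_col (diag_mat_fun n (\<lambda>i. f i * g i))"
  hence ij: "i < n" "j < n" by (auto simp: diag_mat_fun_def)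
  have "(diag_mat_fun n f * diag_mat_fun n g) $$ (i,j)
      = (\<Sum>k\<in>{0..<n}. (if i = k then f i else 0) * (if k = j then g k else 0))"
    using ij by (simp add: diag_mat_fun_def scalar_prod_def)
  also have "\<dots> = (\<Sum>k\<in>{0..<n}. if k = i then (if i = j then f i * g i else 0) else 0)"
    by (intro sum.cong) auto
  finally show "(diag_mat_fun n f * diag_mat_fun n g) $$ (i,j) = diag_mat_fun n (\<lambda>i. f i * g i) $$ (i,j)"
    using ij by (simp add: diag_mat_fun_def)
qed (auto simp: diag_mat_fun_def)

lemma diagonal_mat_eq_diag_mat_fun:
  assumes "D \<in> carrier_mat n n" "diagonal_mat D"
  shows "D = diag_mat_fun n (\<lambda>i. D $$ (i,i))"
  using assms unfolding diag_mat_fun_def diagonal_mat_def by (intro eq_matI) auto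

lemma pd_mat_diag_mat_fun:
  assumes pos: "\<And>i. i < n \<Longrightarrow> 0 < f i"
  shows "pd_mat n (diag_mat_fun n f)"
  unfolding pd_mat_def
proof (intro conjI ballI impI)
  fix x :: "real vec" assume x: "x \<in> carrier_vec n" "x \<noteq> 0\<^sub>v n"
  obtain i where i: "i < n" "x $ i \<noteq> 0" using vec_nonzero_index[OF x] .
  have "x \<bullet> (diag_mat_fun n f *\<^sub>v x) = (\<Sum>k\<in>{0..<n}. f k * (x $ k)^2)"
    using x unfolding diag_mat_fun_def
    by (auto simp: scalar_prod_def power2_eq_square if_distrib if_distribR sum.If_cases intro!: sum.cong)
  also have "\<dots> > 0"
    using i pos by (intro sum_pos2[of _ i]) (auto intro!: mult_nonneg_nonneg simp: less_imp_le)
  finally show "x \<bullet> (diag_mat_fun n f *\<^sub>v x) > 0" .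
qed (auto simp: diag_mat_fun_def intro!: eq_matI)

lemma pd_mat_orthogonal_congruence:
  fixes U E :: "real mat"
  assumes U: "U \<in> carrier_mat n n" "U\<^sup>T * U = 1\<^sub>m n" and E: "pd_mat n E"
  shows "pd_mat n (U * E * U\<^sup>T)"
  unfolding pd_mat_def
proof (intro conjI ballI impI)
  have Ec: "E \<in> carrier_mat n n" "E\<^sup>T = E" using E unfolding pd_mat_def by auto
  show "U * E * U\<^sup>T \<in> carrier_mat n n" using U Ec by simp
  show "(U * E * U\<^sup>T)\<^sup>T = U * E * U\<^sup>T" using transpose_mult_mult[OF U(1) Ec(1), of "U\<^sup>T"] U Ec by simp
  fix x :: "real vec" assume x: "x \<in> carrier_vec n" "x \<noteq> 0\<^sub>v n"
  define y where "y = U\<^sup>T *\<^sub>v x"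
  have y: "y \<in> carrier_vec n" unfolding y_def using U x by simp
  have "U *\<^sub>v y = x"
    using assoc_mult_mat_vec[of U n n "U\<^sup>T" n x] orthogonal_mat_mult_transpose[OF U] U x
    unfolding y_def by simp
  hence "y \<noteq> 0\<^sub>v n" using x U by auto
  hence "0 < y \<bullet> (E *\<^sub>v y)" using E y unfolding pd_mat_def by blast
  also have "y \<bullet> (E *\<^sub>v y) = x \<bullet> (U *\<^sub>v (E *\<^sub>v y))"
    unfolding y_def using transpose_vec_mult_scalar[OF U(1), of "E *\<^sub>v (U\<^sup>T *\<^sub>v x)" x] Ec U x
    by (simp add: comm_scalar_prod[of _ n x])
  also have "\<dots> = x \<bullet> ((U * E * U\<^sup>T) *\<^sub>v x)"
    unfolding y_def using U Ec x by (simp add: assoc_mult_mat_vec[of _ n n _ n])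
  finally show "x \<bullet> ((U * E * U\<^sup>T) *\<^sub>v x) > 0" .
qed

lemma pd_mat_eigenvalue_pos:
  fixes A :: "real mat"
  assumes "pd_mat n A" "eigenvalue A r"
  shows "0 < r"
proof -
  obtain v where v: "v \<in> carrier_vec n" "v \<noteq> 0\<^sub>v n" "A *\<^sub>v v = r \<cdot>\<^sub>v v"
    using assms unfolding pd_mat_def eigenvalue_def eigenvector_def by auto
  have "0 < v \<bullet> (A *\<^sub>v v)" using assms(1) v unfolding pd_mat_def by blast
  also have "\<dots> = r * (v \<bullet> v)" unfolding v(3) using v(1) by simp
  finally show ?thesis using scalar_prod_self_pos[OF v(1,2)] by (simp add: zero_less_mult_iff)
qed

lemma pd_mat_inverse_sqrt_exists:
  fixes A :: "real mat"
  assumes pd: "pd_mat n A"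
  shows "\<exists>S. pd_mat n S \<and> S * S * A = 1\<^sub>m n"
proof -
  have A: "A \<in> carrier_mat n n" "A\<^sup>T = A" using pd unfolding pd_mat_def by auto
  obtain U D where U: "U \<in> carrier_mat n n" "U\<^sup>T * U = 1\<^sub>m n" and D: "D \<in> carrier_mat n n" "diagonal_mat D"
    and UDU: "A = U * D * U\<^sup>T"
    using real_symmetric_mat_diagonalization[OF A] by blast
  define ev where "ev i = D $$ (i,i)" for i
  have pos: "0 < ev i" if "i < n" for i
    using pd_mat_eigenvalue_pos[OF pd] diagonalization_eigenvector[OF U D UDU that]
    unfolding eigenvalue_def ev_def by blast
  define E where "E = diag_mat_fun n (\<lambda>i. 1 / sqrt (ev i))"
  have E: "E \<in> carrier_mat n n" unfolding E_def by (rule diag_mat_fun_carrier)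
  have "1 / sqrt (ev i) * (1 / sqrt (ev i)) * ev i = 1" if "i < n" for i
    using pos[OF that] by (simp add: abs_of_pos)
  hence EED: "E * E * D = 1\<^sub>m n"
    unfolding E_def diagonal_mat_eq_diag_mat_fun[OF D, folded ev_def] diag_mat_fun_mult
    by (auto simp: diag_mat_fun_def intro!: eq_matI)
  have UTU: "U\<^sup>T * (U * X) = X" if "X \<in> carrier_mat n n" for X
    using assoc_mult_mat[of "U\<^sup>T" n n U n X n] U that by simp
  have "U * E * U\<^sup>T * (U * E * U\<^sup>T) * A = U * ((E * E * D) * U\<^sup>T)"
    unfolding UDU using U E D UTU by (simp add: assoc_mult_mat[of _ n n _ n _ n])
  also have "\<dots> = 1\<^sub>m n" unfolding EED using U orthogonal_mat_mult_transpose[OF U] by simp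
  finally have "U * E * U\<^sup>T * (U * E * U\<^sup>T) * A = 1\<^sub>m n" .
  moreover have "pd_mat n (U * E * U\<^sup>T)"
    using pd_mat_orthogonal_congruence[OF U] pd_mat_diag_mat_fun pos unfolding E_def by simp
  ultimately show ?thesis by blast
qed

lemma pd_mat_equal_squares_eigenvalue:
  fixes S1 S2 :: "real mat"
  assumes S1: "pd_mat n S1" and S2: "pd_mat n S2" and squares: "S1 * S1 = S2 * S2"
    and ev: "eigenvalue (S1 - S2) r"
  shows "r = 0"
proof -
  have S1c: "S1 \<in> carrier_mat n n" "S1\<^sup>T = S1" and S2c: "S2 \<in> carrier_mat n n" "S2\<^sup>T = S2"
    using S1 S2 unfolding pd_mat_def by auto
  obtain u where u: "u \<in> carrier_vec n" "u \<noteq> 0\<^sub>v n" "(S1 - S2) *\<^sub>v u = r \<cdot>\<^sub>v u"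
    using ev S1c S2c unfolding eigenvalue_def eigenvector_def by auto
  define a b where "a = S1 *\<^sub>v u" and "b = S2 *\<^sub>v u"
  have ab: "a \<in> carrier_vec n" "b \<in> carrier_vec n" unfolding a_def b_def using S1c S2c u by auto
  have a: "a = b + r \<cdot>\<^sub>v u"
  proof (rule eq_vecI)
    fix i assume "i < dim_vec (b + r \<cdot>\<^sub>v u)"
    hence i: "i < n" using ab u by simp
    have "((S1 - S2) *\<^sub>v u) $ i = (r \<cdot>\<^sub>v u) $ i" using u(3) by simp
    thus "a $ i = (b + r \<cdot>\<^sub>v u) $ i"
      using i S1c S2c u(1) unfolding a_def b_def by (simp add: minus_mult_distrib_mat_vec)
  qed (use ab u in simp)
  have "a \<bullet> a = u \<bullet> ((S1 * S1) *\<^sub>v u)" "b \<bullet> b = u \<bullet> ((S2 * S2) *\<^sub>v u)"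
    unfolding a_def b_def using symmetric_mat_scalar_prod[OF S1c, of u "S1 *\<^sub>v u"]
      symmetric_mat_scalar_prod[OF S2c, of u "S2 *\<^sub>v u"] S1c S2c u(1)
    by (auto simp: assoc_mult_mat_vec)
  moreover have "a \<bullet> a = b \<bullet> b + r * (2 * (u \<bullet> b) + r * (u \<bullet> u))"
    unfolding a using ab u(1)
    by (simp add: add_scalar_prod_distrib[of _ n] scalar_prod_add_distrib[of _ n]
        comm_scalar_prod[of b n u] algebra_simps)
  ultimately have rfactor: "r * (2 * (u \<bullet> b) + r * (u \<bullet> u)) = 0" using squares by simp
  have "u \<bullet> a = u \<bullet> b + r * (u \<bullet> u)"
    unfolding a using ab u(1) by (simp add: scalar_prod_add_distrib[of _ n])
  moreover have "0 < u \<bullet> a" "0 < u \<bullet> b"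
    using S1 S2 u unfolding a_def b_def pd_mat_def by auto
  \<comment> \<open>so the second factor is \<open>u \<bullet> S\<^sub>1 u + u \<bullet> S\<^sub>2 u > 0\<close>\<close>
  ultimately have "2 * (u \<bullet> b) + r * (u \<bullet> u) \<noteq> 0" by linarith
  thus "r = 0" using rfactor by simp
qed

lemma pd_mat_equal_squares:
  fixes S1 S2 :: "real mat"
  assumes S1: "pd_mat n S1" and S2: "pd_mat n S2" and squares: "S1 * S1 = S2 * S2"
  shows "S1 = S2"
proof -
  have S1c: "S1 \<in> carrier_mat n n" "S1\<^sup>T = S1" and S2c: "S2 \<in> carrier_mat n n" "S2\<^sup>T = S2"
    using S1 S2 unfolding pd_mat_def by auto
  have diff: "S1 - S2 \<in> carrier_mat n n" "(S1 - S2)\<^sup>T = S1 - S2"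
    using S1c S2c by (auto intro!: eq_matI simp: symmetric_mat_index[OF S1c] symmetric_mat_index[OF S2c])
  hence zero: "S1 - S2 = 0\<^sub>m n n"
    using symmetric_mat_eq_zero_iff_eigenvalues_zero pd_mat_equal_squares_eigenvalue[OF S1 S2 squares] by blast
  show ?thesis
  proof (rule eq_matI)
    fix i j assume ij: "i < dim_row S2" "j < dim_col S2"
    hence "(S1 - S2) $$ (i,j) = 0" unfolding zero using S2c by simp
    thus "S1 $$ (i,j) = S2 $$ (i,j)" using ij S1c S2c by simp
  qed (use S1c S2c in auto)
qed

lemma pd_mat_inverse_sqrt_unique:
  fixes A S1 S2 :: "real mat"
  assumes A: "A \<in> carrier_mat n n"
    and S1: "pd_mat n S1" "S1 * S1 * A = 1\<^sub>m n" and S2: "pd_mat n S2" "S2 * S2 * A = 1\<^sub>m n"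
  shows "S1 = S2"
proof (rule pd_mat_equal_squares[OF S1(1) S2(1)])
  have SS1: "S1 * S1 \<in> carrier_mat n n" and SS2: "S2 * S2 \<in> carrier_mat n n"
    using S1 S2 unfolding pd_mat_def by auto
  have "S1 * S1 = (S1 * S1) * (A * (S2 * S2))"
    unfolding mat_mult_left_right_inverse[OF SS2 A S2(2)] using right_mult_one_mat[OF SS1] by simp
  also have "\<dots> = (S1 * S1 * A) * (S2 * S2)" by (rule assoc_mult_mat[OF SS1 A SS2, symmetric])
  finally show "S1 * S1 = S2 * S2" unfolding S1(2) using left_mult_one_mat[OF SS2] by simp
qed

lemma inv_sqrt_mat:
  fixes A :: "real mat"
  assumes "pd_mat n A"
  shows "pd_mat n (inv_sqrt_mat n A)" "inv_sqrt_mat n A * inv_sqrt_mat n A * A = 1\<^sub>m n"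
proof -
  have "\<exists>!S. pd_mat n S \<and> S * S * A = 1\<^sub>m n"
    using pd_mat_inverse_sqrt_exists[OF assms] pd_mat_inverse_sqrt_unique assms
    unfolding pd_mat_def by blast
  from theI'[OF this] show "pd_mat n (inv_sqrt_mat n A)" "inv_sqrt_mat n A * inv_sqrt_mat n A * A = 1\<^sub>m n"
    unfolding inv_sqrt_mat_def by auto
qed

lemma congruence_eigenvector_quadratic_forms:
  fixes S P Q :: "real mat"
  assumes S: "S \<in> carrier_mat n n" "S\<^sup>T = S" and P: "P \<in> carrier_mat n n" and Q: "Q \<in> carrier_mat n n"
    and SPS: "S * P * S = 1\<^sub>m n" and v: "eigenvector (S * Q * S) v r"
  shows "(S *\<^sub>v v) \<bullet> (P *\<^sub>v (S *\<^sub>v v)) = v \<bullet> v" "(S *\<^sub>v v) \<bullet> (Q *\<^sub>v (S *\<^sub>v v)) = r * (v \<bullet> v)"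
proof -
  have v: "v \<in> carrier_vec n" "(S * Q * S) *\<^sub>v v = r \<cdot>\<^sub>v v"
    using v S Q unfolding eigenvector_def by auto
  have form: "v \<bullet> ((S * M * S) *\<^sub>v v) = (S *\<^sub>v v) \<bullet> (M *\<^sub>v (S *\<^sub>v v))" if M: "M \<in> carrier_mat n n" for M
  proof -
    have "(S * M * S) *\<^sub>v v = S *\<^sub>v (M *\<^sub>v (S *\<^sub>v v))"
      using S M v by (simp add: assoc_mult_mat_vec[of _ n n _ n])
    thus ?thesis using symmetric_mat_scalar_prod[OF S v(1), of "M *\<^sub>v (S *\<^sub>v v)"] S M v by simp
  qed
  show "(S *\<^sub>v v) \<bullet> (P *\<^sub>v (S *\<^sub>v v)) = v \<bullet> v" using form[OF P] v(1) unfolding SPS by simp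
  show "(S *\<^sub>v v) \<bullet> (Q *\<^sub>v (S *\<^sub>v v)) = r * (v \<bullet> v)" using form[OF Q] v by simp
qed

section \<open>Block structure of the product space\<close>

lemma blk_offset_Suc: "1 \<le> k \<Longrightarrow> blk_offset d (Suc k) = blk_offset d k + d k"
  unfolding blk_offset_def by (simp add: sum.atLeastLessThan_Suc)

lemma blk_offset_mono: "k \<le> k' \<Longrightarrow> blk_offset d k \<le> blk_offset d k'"
  unfolding blk_offset_def by (intro sum_mono2) auto

lemma qdim_eq_blk_offset: "qdim d K = blk_offset d (Suc K)"
  unfolding qdim_def blk_offset_def by (simp add: atLeastLessThanSuc_atLeastAtMost)

lemma blk_index_less:
  assumes "1 \<le> k" "k < k'" "i < d k"
  shows "blk_offset d k + i < blk_offset d k'"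
proof -
  have "blk_offset d k + i < blk_offset d (Suc k)" using assms blk_offset_Suc[of k d] by simp
  also have "\<dots> \<le> blk_offset d k'" using assms by (intro blk_offset_mono) simp
  finally show ?thesis .
qed

lemma blk_index_less_qdim: "k \<in> {1..K} \<Longrightarrow> i < d k \<Longrightarrow> blk_offset d k + i < qdim d K"
  unfolding qdim_eq_blk_offset by (rule blk_index_less) auto

lemma blk_index_eq_iff:
  assumes "k \<in> {1..K}" "k' \<in> {1..K}" "i < d k" "i' < d k'"
  shows "blk_offset d k + i = blk_offset d k' + i' \<longleftrightarrow> k = k' \<and> i = i'"
  using blk_index_less[of k k' i d] blk_index_less[of k' k i' d] assms
  by (cases k k' rule: linorder_cases) auto

lemma blk_index_cover: "p < qdim d K \<Longrightarrow> \<exists>k\<in>{1..K}. \<exists>i<d k. p = blk_offset d k + i"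
proof (induction K)
  case 0
  then show ?case unfolding qdim_def by simp
next
  case (Suc K)
  show ?case
  proof (cases "p < qdim d K")
    case True
    then show ?thesis using Suc.IH by fastforce
  next
    case False
    hence "p - blk_offset d (Suc K) < d (Suc K)" "p = blk_offset d (Suc K) + (p - blk_offset d (Suc K))"
      using Suc.prems unfolding qdim_eq_blk_offset[symmetric] by (auto simp: qdim_def)
    thus ?thesis by (intro bexI[of _ "Suc K"]) auto
  qed
qed

lemma tau_carrier: "tau d K k \<in> carrier_mat (d k) (qdim d K)"
  unfolding tau_def by simp

lemma tau_mult_vec_carrier: "w \<in> carrier_vec (qdim d K) \<Longrightarrow> tau d K k *\<^sub>v w \<in> carrier_vec (d k)"
  using tau_carrier[of d K k] by simp

lemma tau_mult_vec:
  assumes k: "k \<in> {1..K}" and w: "w \<in> carrier_vec (qdim d K)"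
  shows "tau d K k *\<^sub>v w = vec (d k) (\<lambda>i. w $ (blk_offset d k + i))"
proof (rule eq_vecI)
  fix i assume "i < dim_vec (vec (d k) (\<lambda>i. w $ (blk_offset d k + i)))"
  hence i: "i < d k" by simp
  have "(tau d K k *\<^sub>v w) $ i = (\<Sum>p\<in>{0..<qdim d K}. (if p = blk_offset d k + i then 1 else 0) * w $ p)"
    using i w unfolding tau_def by (simp add: scalar_prod_def)
  also have "\<dots> = (\<Sum>p\<in>{0..<qdim d K}. if p = blk_offset d k + i then w $ p else 0)"
    by (intro sum.cong) auto
  finally show "(tau d K k *\<^sub>v w) $ i = vec (d k) (\<lambda>i. w $ (blk_offset d k + i)) $ i"
    using i blk_index_less_qdim[where d = d, OF k i] by simp
qed (simp add: tau_def)

lemma tau_mult_unit_vec: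
  assumes a: "a \<in> {1..K}" and k: "k \<in> {1..K}" and i: "i < d k"
  shows "tau d K a *\<^sub>v unit_vec (qdim d K) (blk_offset d k + i) = (if a = k then unit_vec (d a) i else 0\<^sub>v (d a))"
  unfolding tau_mult_vec[OF a unit_vec_carrier]
  using blk_index_less_qdim[of a K _ d, OF a] blk_index_less_qdim[where d = d, OF k i] blk_index_eq_iff[of a K k _ d i] a k i
  by (intro eq_vecI) auto

lemma msum_carrier: "msum n m F I \<in> carrier_mat n m"
  unfolding msum_def by simp

lemma msum_cong: "(\<And>k. k \<in> I \<Longrightarrow> F k = G k) \<Longrightarrow> msum n m F I = msum n m G I"
  unfolding msum_def by (intro eq_matI) auto

lemma msum_zero: "msum n m (\<lambda>_. 0\<^sub>m n m) I = 0\<^sub>m n m"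
  unfolding msum_def by (intro eq_matI) auto

lemma msum_index: "i < n \<Longrightarrow> j < m \<Longrightarrow> msum n m F I $$ (i, j) = (\<Sum>k\<in>I. F k $$ (i, j))"
  unfolding msum_def by simp

lemma transpose_msum:
  assumes "\<And>k. k \<in> I \<Longrightarrow> F k \<in> carrier_mat n m"
  shows "(msum n m F I)\<^sup>T = msum m n (\<lambda>k. (F k)\<^sup>T) I"
proof -
  have "(F k)\<^sup>T $$ (i, j) = F k $$ (j, i)" if "k \<in> I" "i < m" "j < n" for k i j
    using assms[OF that(1)] that by simp
  thus ?thesis by (intro eq_matI) (auto simp: msum_def intro!: sum.cong)
qed

lemma scalar_prod_msum_mult_vec:
  fixes F :: "'i \<Rightarrow> real mat"
  assumes F: "\<And>k. k \<in> I \<Longrightarrow> F k \<in> carrier_mat n m" and x: "x \<in> carrier_vec n" and y: "y \<in> carrier_vec m"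
  shows "x \<bullet> (msum n m F I *\<^sub>v y) = (\<Sum>k\<in>I. x \<bullet> (F k *\<^sub>v y))"
proof -
  have row: "(\<Sum>p'<m. (\<Sum>k\<in>I. F k $$ (p,p')) * y $ p') = (\<Sum>k\<in>I. \<Sum>p'<m. F k $$ (p,p') * y $ p')"
    for p by (simp add: sum_distrib_right) (rule sum.swap)
  have "x \<bullet> (msum n m F I *\<^sub>v y) = (\<Sum>p<n. x $ p * (\<Sum>p'<m. (\<Sum>k\<in>I. F k $$ (p,p')) * y $ p'))"
    using x y by (simp add: msum_def scalar_prod_def lessThan_atLeast0)
  also have "\<dots> = (\<Sum>p<n. \<Sum>k\<in>I. x $ p * (\<Sum>p'<m. F k $$ (p,p') * y $ p'))"
    by (simp add: row sum_distrib_left)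
  also have "\<dots> = (\<Sum>k\<in>I. \<Sum>p<n. x $ p * (\<Sum>p'<m. F k $$ (p,p') * y $ p'))" by (rule sum.swap)
  also have "\<dots> = (\<Sum>k\<in>I. x \<bullet> (F k *\<^sub>v y))"
  proof (intro sum.cong refl)
    fix k assume "k \<in> I"
    thus "(\<Sum>p<n. x $ p * (\<Sum>p'<m. F k $$ (p,p') * y $ p')) = x \<bullet> (F k *\<^sub>v y)"
      using F[of k] x y by (simp add: scalar_prod_def lessThan_atLeast0)
  qed
  finally show ?thesis .
qed

lemma scalar_prod_transpose_mult_mult_vec:
  fixes V :: "'a :: comm_semiring_0 mat"
  assumes A: "A \<in> carrier_mat a n" and B: "B \<in> carrier_mat b m" and V: "V \<in> carrier_mat a b"
    and x: "x \<in> carrier_vec n" and y: "y \<in> carrier_vec m"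
  shows "x \<bullet> ((A\<^sup>T * V * B) *\<^sub>v y) = (A *\<^sub>v x) \<bullet> (V *\<^sub>v (B *\<^sub>v y))"
proof -
  have z: "V *\<^sub>v (B *\<^sub>v y) \<in> carrier_vec a" using V B y by simp
  have "(A\<^sup>T * V * B) *\<^sub>v y = (A\<^sup>T * V) *\<^sub>v (B *\<^sub>v y)"
    by (rule assoc_mult_mat_vec) (use A B V y in auto)
  also have "\<dots> = A\<^sup>T *\<^sub>v (V *\<^sub>v (B *\<^sub>v y))"
    by (rule assoc_mult_mat_vec) (use A B V y in auto)
  finally have "(A\<^sup>T * V * B) *\<^sub>v y = A\<^sup>T *\<^sub>v (V *\<^sub>v (B *\<^sub>v y))" .
  hence "x \<bullet> ((A\<^sup>T * V * B) *\<^sub>v y) = (V *\<^sub>v (B *\<^sub>v y)) \<bullet> (A *\<^sub>v x)"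
    using transpose_vec_mult_scalar[OF A x z] comm_scalar_prod[OF x, of "A\<^sup>T *\<^sub>v (V *\<^sub>v (B *\<^sub>v y))"] A z
    by simp
  thus ?thesis using comm_scalar_prod[OF z, of "A *\<^sub>v x"] A x by simp
qed

lemma tau_transpose_mult_mult_index:
  assumes a: "a \<in> {1..K}" and b: "b \<in> {1..K}" and k: "k \<in> {1..K}" and l: "l \<in> {1..K}"
    and i: "i < d k" and j: "j < d l" and V: "V \<in> carrier_mat (d a) (d b)"
  shows "((tau d K a)\<^sup>T * V * tau d K b) $$ (blk_offset d k + i, blk_offset d l + j)
    = (if a = k \<and> b = l then V $$ (i, j) else 0)"
proof -
  define p p' where "p = blk_offset d k + i" and "p' = blk_offset d l + j"
  have p: "p < qdim d K" and p': "p' < qdim d K"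
    unfolding p_def p'_def using blk_index_less_qdim k i l j by auto
  have C: "(tau d K a)\<^sup>T * V * tau d K b \<in> carrier_mat (qdim d K) (qdim d K)"
    using tau_carrier[of d K a] tau_carrier[of d K b] V by simp
  have "((tau d K a)\<^sup>T * V * tau d K b) $$ (p, p')
      = (((tau d K a)\<^sup>T * V * tau d K b) *\<^sub>v unit_vec (qdim d K) p') $ p"
    by (rule mult_mat_vec_unit_vec[OF C p p', symmetric])
  also have "\<dots> = unit_vec (qdim d K) p \<bullet> (((tau d K a)\<^sup>T * V * tau d K b) *\<^sub>v unit_vec (qdim d K) p')"
    by (rule scalar_prod_left_unit[symmetric]) (use C p in auto)
  also have "\<dots> = (tau d K a *\<^sub>v unit_vec (qdim d K) p) \<bullet> (V *\<^sub>v (tau d K b *\<^sub>v unit_vec (qdim d K) p'))"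
    by (rule scalar_prod_transpose_mult_mult_vec[OF tau_carrier[of d K a] tau_carrier[of d K b] V]) auto
  also have "\<dots> = (if a = k \<and> b = l then V $$ (i, j) else 0)"
    unfolding p_def p'_def tau_mult_unit_vec[where d = d, OF a k i] tau_mult_unit_vec[where d = d, OF b l j]
    using i j V by (auto simp: mult_mat_vec_unit_vec)
  finally show ?thesis unfolding p_def p'_def .
qed

section \<open>Second moments and the operators \<open>\<Phi>\<close>, \<open>\<Psi>\<close>, \<open>T\<close>\<close>

lemma integrable_mult_of_square_integrable:
  fixes f g :: "'a \<Rightarrow> real"
  assumes "f \<in> borel_measurable M" "g \<in> borel_measurable M"
    and "integrable M (\<lambda>\<omega>. (f \<omega>)\<^sup>2)" "integrable M (\<lambda>\<omega>. (g \<omega>)\<^sup>2)"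
  shows "integrable M (\<lambda>\<omega>. f \<omega> * g \<omega>)"
proof (rule Bochner_Integration.integrable_bound[of _ "\<lambda>\<omega>. (f \<omega>)\<^sup>2 + (g \<omega>)\<^sup>2"])
  show "integrable M (\<lambda>\<omega>. (f \<omega>)\<^sup>2 + (g \<omega>)\<^sup>2)" using assms by auto
  show "(\<lambda>\<omega>. f \<omega> * g \<omega>) \<in> borel_measurable M" using assms by auto
  have "\<bar>f \<omega> * g \<omega>\<bar> \<le> (f \<omega>)\<^sup>2 + (g \<omega>)\<^sup>2" for \<omega>
  proof -
    have "2 * (\<bar>f \<omega>\<bar> * \<bar>g \<omega>\<bar>) \<le> (f \<omega>)\<^sup>2 + (g \<omega>)\<^sup>2"
      using zero_le_power2[of "\<bar>f \<omega>\<bar> - \<bar>g \<omega>\<bar>"] by (simp add: power2_diff)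
    moreover have "0 \<le> \<bar>f \<omega>\<bar> * \<bar>g \<omega>\<bar>" by simp
    ultimately show ?thesis unfolding abs_mult by linarith
  qed
  thus "AE \<omega> in M. norm (f \<omega> * g \<omega>) \<le> norm ((f \<omega>)\<^sup>2 + (g \<omega>)\<^sup>2)" by simp
qed

lemma integrable_square_of_integrable_sum_squares:
  fixes Y :: "'a \<Rightarrow> nat \<Rightarrow> real"
  assumes "integrable M (\<lambda>\<omega>. \<Sum>i<n. (Y \<omega> i)\<^sup>2)" "(\<lambda>\<omega>. Y \<omega> j) \<in> borel_measurable M" "j < n"
  shows "integrable M (\<lambda>\<omega>. (Y \<omega> j)\<^sup>2)"
proof (rule Bochner_Integration.integrable_bound[OF assms(1)])
  show "(\<lambda>\<omega>. (Y \<omega> j)\<^sup>2) \<in> borel_measurable M" using assms(2) by simp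
  have "(Y \<omega> j)\<^sup>2 \<le> (\<Sum>i<n. (Y \<omega> i)\<^sup>2)" for \<omega>
    by (rule member_le_sum) (use assms(3) in auto)
  thus "AE \<omega> in M. norm ((Y \<omega> j)\<^sup>2) \<le> norm (\<Sum>i<n. (Y \<omega> i)\<^sup>2)"
    by (simp add: sum_nonneg)
qed

lemma sum_off_diagonal_swap:
  assumes "finite A"
  shows "(\<Sum>k\<in>A. \<Sum>l\<in>A - {k}. f k l) = (\<Sum>l\<in>A. \<Sum>k\<in>A - {l}. f k l)"
proof -
  have "A - {x} = {y \<in> A. y \<noteq> x}" for x by auto
  thus ?thesis using sum.swap_restrict[OF assms assms, of f "\<lambda>k l. l \<noteq> k"] by (simp add: eq_commute)
qed

locale mlca =
  fixes M :: "'a measure" and X :: "nat \<Rightarrow> 'a \<Rightarrow> nat \<Rightarrow> real" and d :: "nat \<Rightarrow> nat" and K :: nat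
  assumes meas: "\<And>k i. k \<in> {1..K} \<Longrightarrow> i < d k \<Longrightarrow> (\<lambda>\<omega>. X k \<omega> i) \<in> borel_measurable M"
    and sq: "\<And>k. k \<in> {1..K} \<Longrightarrow> integrable M (\<lambda>\<omega>. \<Sum>i<d k. (X k \<omega> i)\<^sup>2)"
    and inv: "\<And>k. k \<in> {1..K} \<Longrightarrow> invertible_mat (covop M X d k k)"
begin

abbreviation "q \<equiv> qdim d K"
abbreviation "V \<equiv> covop M X d"
abbreviation "\<tau> \<equiv> tau d K"
abbreviation "Phi \<equiv> Phi_op M X d K"
abbreviation "Psi \<equiv> Psi_op M X d K"
abbreviation "S \<equiv> inv_sqrt_mat q Phi"
abbreviation "T \<equiv> T_op M X d K"

definition lin_comb :: "real vec \<Rightarrow> nat \<Rightarrow> 'a \<Rightarrow> real" where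
  "lin_comb z k \<omega> = (\<Sum>i<d k. z $ i * X k \<omega> i)"

lemma covop_carrier: "V k l \<in> carrier_mat (d k) (d l)"
  unfolding covop_def by simp

lemma transpose_covop: "(V k l)\<^sup>T = V l k"
  unfolding covop_def by (intro eq_matI) (auto simp: mult.commute)

lemma integrable_cross_moment:
  assumes "k \<in> {1..K}" "l \<in> {1..K}" "i < d k" "j < d l"
  shows "integrable M (\<lambda>\<omega>. X k \<omega> i * X l \<omega> j)"
  using assms by (intro integrable_mult_of_square_integrable meas integrable_square_of_integrable_sum_squares[OF sq])

lemma lin_comb_mult_expand:
  "lin_comb z k \<omega> * lin_comb z' l \<omega> = (\<Sum>i<d k. \<Sum>j<d l. (z $ i * z' $ j) * (X k \<omega> i * X l \<omega> j))"
  unfolding lin_comb_def by (simp add: sum_product mult.commute mult.left_commute)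

lemma integrable_lin_comb_mult:
  assumes "k \<in> {1..K}" "l \<in> {1..K}"
  shows "integrable M (\<lambda>\<omega>. lin_comb z k \<omega> * lin_comb z' l \<omega>)"
  unfolding lin_comb_mult_expand using assms
  by (intro Bochner_Integration.integrable_sum integrable_mult_right integrable_cross_moment) auto

lemma scalar_prod_covop:
  assumes k: "k \<in> {1..K}" and l: "l \<in> {1..K}" and z: "z \<in> carrier_vec (d k)" and z': "z' \<in> carrier_vec (d l)"
  shows "z \<bullet> (V k l *\<^sub>v z') = integral\<^sup>L M (\<lambda>\<omega>. lin_comb z k \<omega> * lin_comb z' l \<omega>)"
proof -
  have "z \<bullet> (V k l *\<^sub>v z')
      = (\<Sum>i<d k. \<Sum>j<d l. integral\<^sup>L M (\<lambda>\<omega>. (z $ i * z' $ j) * (X k \<omega> i * X l \<omega> j)))"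
    using z z' unfolding covop_def
    by (simp add: scalar_prod_def lessThan_atLeast0 sum_distrib_left mult.commute mult.left_commute)
  also have "\<dots> = (\<Sum>i<d k. integral\<^sup>L M (\<lambda>\<omega>. \<Sum>j<d l. (z $ i * z' $ j) * (X k \<omega> i * X l \<omega> j)))"
    by (intro sum.cong refl Bochner_Integration.integral_sum[symmetric] integrable_mult_right
        integrable_cross_moment[OF k l]) auto
  also have "\<dots> = integral\<^sup>L M (\<lambda>\<omega>. lin_comb z k \<omega> * lin_comb z' l \<omega>)"
    unfolding lin_comb_mult_expand
    by (intro Bochner_Integration.integral_sum[symmetric] Bochner_Integration.integrable_sum
        integrable_mult_right integrable_cross_moment[OF k l]) auto
  finally show ?thesis .
qed

lemma lin_comb_square_integral_eq_zero:
  assumes k: "k \<in> {1..K}" and z: "z \<in> carrier_vec (d k)"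
    and zero: "integral\<^sup>L M (\<lambda>\<omega>. lin_comb z k \<omega> * lin_comb z k \<omega>) = 0"
  shows "z = 0\<^sub>v (d k)"
proof -
  have "AE \<omega> in M. lin_comb z k \<omega> = 0"
    using integral_nonneg_eq_0_iff_AE[OF integrable_lin_comb_mult[OF k k]] zero by simp
  hence "AE \<omega> in M. lin_comb (unit_vec (d k) j) k \<omega> * lin_comb z k \<omega> = 0" for j by auto
  \<comment> \<open>the cross moments \<open>E(X\<^sub>k\<^sub>j \<langle>z, X\<^sub>k\<rangle>)\<close> are the entries of \<open>V\<^sub>k\<^sub>k z\<close>\<close>
  hence "unit_vec (d k) j \<bullet> (V k k *\<^sub>v z) = 0" for j
    using integral_eq_zero_AE scalar_prod_covop[OF k k unit_vec_carrier z] by metis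
  hence "V k k *\<^sub>v z = 0\<^sub>v (d k)"
    using scalar_prod_left_unit[of "V k k *\<^sub>v z" "d k"] covop_carrier[of k k] z by (intro eq_vecI) auto
  thus ?thesis by (rule invertible_mat_mult_vec_eq_zero[OF inv[OF k] covop_carrier z])
qed

lemma covop_nonneg:
  assumes "k \<in> {1..K}" "z \<in> carrier_vec (d k)"
  shows "0 \<le> z \<bullet> (V k k *\<^sub>v z)"
  unfolding scalar_prod_covop[OF assms(1,1,2,2)] by (intro Bochner_Integration.integral_nonneg) simp

lemma covop_pd:
  assumes k: "k \<in> {1..K}"
  shows "pd_mat (d k) (V k k)"
  unfolding pd_mat_def
proof (intro conjI ballI impI)
  fix z :: "real vec" assume z: "z \<in> carrier_vec (d k)" "z \<noteq> 0\<^sub>v (d k)"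
  have "0 \<le> z \<bullet> (V k k *\<^sub>v z)" by (rule covop_nonneg[OF k z(1)])
  moreover have "z \<bullet> (V k k *\<^sub>v z) \<noteq> 0"
    using lin_comb_square_integral_eq_zero[OF k z(1)] z(2) scalar_prod_covop[OF k k z(1) z(1)] by auto
  ultimately show "z \<bullet> (V k k *\<^sub>v z) > 0" by simp
qed (auto simp: covop_carrier transpose_covop)

lemma block_carrier: "(\<tau> k)\<^sup>T * V k l * \<tau> l \<in> carrier_mat q q"
  using tau_carrier[of d K k] tau_carrier[of d K l] covop_carrier[of k l] by simp

lemma transpose_block: "((\<tau> k)\<^sup>T * V k l * \<tau> l)\<^sup>T = (\<tau> l)\<^sup>T * V l k * \<tau> k"
proof -
  have "((\<tau> k)\<^sup>T * V k l * \<tau> l)\<^sup>T = (\<tau> l)\<^sup>T * ((\<tau> k)\<^sup>T * V k l)\<^sup>T"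
    by (rule transpose_mult) (use tau_carrier[of d K k] tau_carrier[of d K l] covop_carrier[of k l] in auto)
  also have "((\<tau> k)\<^sup>T * V k l)\<^sup>T = V l k * \<tau> k"
    using transpose_mult[of "(\<tau> k)\<^sup>T" q "d k" "V k l" "d l"] tau_carrier[of d K k] covop_carrier[of k l]
    by (simp add: transpose_covop)
  finally show ?thesis
    using tau_carrier[of d K l] tau_carrier[of d K k] covop_carrier[of l k]
    by (simp add: assoc_mult_mat[of _ q "d l"])
qed

lemma scalar_prod_block:
  "x \<in> carrier_vec q \<Longrightarrow> w \<in> carrier_vec q \<Longrightarrow>
    x \<bullet> (((\<tau> k)\<^sup>T * V k l * \<tau> l) *\<^sub>v w) = (\<tau> k *\<^sub>v x) \<bullet> (V k l *\<^sub>v (\<tau> l *\<^sub>v w))"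
  by (rule scalar_prod_transpose_mult_mult_vec[OF tau_carrier[of d K k] tau_carrier[of d K l] covop_carrier])

lemma Phi_carrier: "Phi \<in> carrier_mat q q"
  unfolding Phi_op_def by (rule msum_carrier)

lemma Psi_carrier: "Psi \<in> carrier_mat q q"
  unfolding Psi_op_def by (rule msum_carrier)

lemma Phi_symmetric: "Phi\<^sup>T = Phi"
  unfolding Phi_op_def by (subst transpose_msum) (auto intro!: msum_cong block_carrier simp: transpose_block)

lemma Psi_symmetric: "Psi\<^sup>T = Psi"
proof -
  have "Psi\<^sup>T = msum q q (\<lambda>k. msum q q (\<lambda>l. (\<tau> l)\<^sup>T * V l k * \<tau> k) ({1..K} - {k})) {1..K}"
    unfolding Psi_op_def
    by (subst transpose_msum) (auto intro!: msum_cong msum_carrier simp: transpose_msum block_carrier transpose_block)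
  also have "\<dots> = Psi"
    unfolding Psi_op_def msum_def by (intro eq_matI) (auto intro: sum_off_diagonal_swap)
  finally show ?thesis .
qed

lemma scalar_prod_Phi:
  assumes "x \<in> carrier_vec q" "w \<in> carrier_vec q"
  shows "x \<bullet> (Phi *\<^sub>v w) = (\<Sum>k\<in>{1..K}. (\<tau> k *\<^sub>v x) \<bullet> (V k k *\<^sub>v (\<tau> k *\<^sub>v w)))"
  unfolding Phi_op_def using assms by (simp add: scalar_prod_msum_mult_vec block_carrier scalar_prod_block)

lemma scalar_prod_Psi:
  assumes "x \<in> carrier_vec q" "w \<in> carrier_vec q"
  shows "x \<bullet> (Psi *\<^sub>v w) = (\<Sum>k\<in>{1..K}. \<Sum>l\<in>{1..K} - {k}. (\<tau> k *\<^sub>v x) \<bullet> (V k l *\<^sub>v (\<tau> l *\<^sub>v w)))"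
  unfolding Psi_op_def using assms
  by (simp add: scalar_prod_msum_mult_vec msum_carrier block_carrier scalar_prod_block)

lemma Phi_pd: "pd_mat q Phi"
  unfolding pd_mat_def
proof (intro conjI ballI impI Phi_carrier Phi_symmetric)
  fix w :: "real vec" assume w: "w \<in> carrier_vec q" "w \<noteq> 0\<^sub>v q"
  obtain p where p: "p < q" "w $ p \<noteq> 0" using vec_nonzero_index[OF w] .
  then obtain k i where k: "k \<in> {1..K}" and i: "i < d k" and pk: "p = blk_offset d k + i"
    using blk_index_cover by blast
  have "(\<tau> k *\<^sub>v w) $ i \<noteq> 0" using p i unfolding pk tau_mult_vec[OF k w(1)] by simp
  hence "\<tau> k *\<^sub>v w \<noteq> 0\<^sub>v (d k)" using i by auto
  hence "0 < (\<tau> k *\<^sub>v w) \<bullet> (V k k *\<^sub>v (\<tau> k *\<^sub>v w))"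
    using covop_pd[OF k] tau_carrier[of d K k] w(1) unfolding pd_mat_def by auto
  also have "\<dots> \<le> w \<bullet> (Phi *\<^sub>v w)"
    unfolding scalar_prod_Phi[OF w(1) w(1)] using k w(1)
    by (intro member_le_sum covop_nonneg tau_mult_vec_carrier) auto
  finally show "w \<bullet> (Phi *\<^sub>v w) > 0" .
qed

lemma quadratic_form_bounds:
  assumes w: "w \<in> carrier_vec q"
  shows "0 \<le> w \<bullet> (Phi *\<^sub>v w) + w \<bullet> (Psi *\<^sub>v w)"
    and "w \<bullet> (Phi *\<^sub>v w) + w \<bullet> (Psi *\<^sub>v w) \<le> real K * (w \<bullet> (Phi *\<^sub>v w))"
proof -
  define Y where "Y k = lin_comb (\<tau> k *\<^sub>v w) k" for k
  have int: "integrable M (\<lambda>\<omega>. Y k \<omega> * Y l \<omega>)" if "k \<in> {1..K}" "l \<in> {1..K}" for k l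
    unfolding Y_def using that by (rule integrable_lin_comb_mult)
  have E: "(\<tau> k *\<^sub>v w) \<bullet> (V k l *\<^sub>v (\<tau> l *\<^sub>v w)) = integral\<^sup>L M (\<lambda>\<omega>. Y k \<omega> * Y l \<omega>)"
    if "k \<in> {1..K}" "l \<in> {1..K}" for k l
    unfolding Y_def using that tau_carrier[of d K k] tau_carrier[of d K l] w by (intro scalar_prod_covop) auto
  have "w \<bullet> (Phi *\<^sub>v w) + w \<bullet> (Psi *\<^sub>v w)
      = (\<Sum>k\<in>{1..K}. \<Sum>l\<in>{1..K}. integral\<^sup>L M (\<lambda>\<omega>. Y k \<omega> * Y l \<omega>))"
    unfolding scalar_prod_Phi[OF w w] scalar_prod_Psi[OF w w] sum.distrib[symmetric]
  proof (intro sum.cong refl)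
    fix k assume k: "k \<in> {1..K}"
    thus "(\<tau> k *\<^sub>v w) \<bullet> (V k k *\<^sub>v (\<tau> k *\<^sub>v w)) + (\<Sum>l\<in>{1..K} - {k}. (\<tau> k *\<^sub>v w) \<bullet> (V k l *\<^sub>v (\<tau> l *\<^sub>v w)))
        = (\<Sum>l\<in>{1..K}. integral\<^sup>L M (\<lambda>\<omega>. Y k \<omega> * Y l \<omega>))"
      using sum.remove[of "{1..K}" k "\<lambda>l. integral\<^sup>L M (\<lambda>\<omega>. Y k \<omega> * Y l \<omega>)"] by (simp add: E)
  qed
  also have "\<dots> = (\<Sum>k\<in>{1..K}. integral\<^sup>L M (\<lambda>\<omega>. \<Sum>l\<in>{1..K}. Y k \<omega> * Y l \<omega>))"
    by (intro sum.cong refl Bochner_Integration.integral_sum[symmetric] int) auto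
  also have "\<dots> = integral\<^sup>L M (\<lambda>\<omega>. (\<Sum>k\<in>{1..K}. Y k \<omega>)\<^sup>2)"
    unfolding power2_eq_square sum_product
    by (intro Bochner_Integration.integral_sum[symmetric] Bochner_Integration.integrable_sum int) auto
  finally have sum: "w \<bullet> (Phi *\<^sub>v w) + w \<bullet> (Psi *\<^sub>v w) = integral\<^sup>L M (\<lambda>\<omega>. (\<Sum>k\<in>{1..K}. Y k \<omega>)\<^sup>2)" .
  have diag: "w \<bullet> (Phi *\<^sub>v w) = integral\<^sup>L M (\<lambda>\<omega>. \<Sum>k\<in>{1..K}. (Y k \<omega>)\<^sup>2)"
    unfolding scalar_prod_Phi[OF w w] using int by (simp add: E power2_eq_square Bochner_Integration.integral_sum)
  show "0 \<le> w \<bullet> (Phi *\<^sub>v w) + w \<bullet> (Psi *\<^sub>v w)"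
    unfolding sum by (intro Bochner_Integration.integral_nonneg) simp
  have "integral\<^sup>L M (\<lambda>\<omega>. (\<Sum>k\<in>{1..K}. Y k \<omega>)\<^sup>2) \<le> integral\<^sup>L M (\<lambda>\<omega>. real K * (\<Sum>k\<in>{1..K}. (Y k \<omega>)\<^sup>2))"
    using sum_squared_le_sum_of_squares[of "\<lambda>k. Y k _" "{1..K}"] int
    by (intro integral_mono) (auto simp: power2_eq_square sum_product mult.commute
        intro!: Bochner_Integration.integrable_sum)
  thus "w \<bullet> (Phi *\<^sub>v w) + w \<bullet> (Psi *\<^sub>v w) \<le> real K * (w \<bullet> (Phi *\<^sub>v w))"
    unfolding sum by (simp add: diag)
qed

lemma S_carrier: "S \<in> carrier_mat q q"
  and S_symmetric: "S\<^sup>T = S"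
  and S_S_Phi: "S * S * Phi = 1\<^sub>m q"
  using inv_sqrt_mat[OF Phi_pd] unfolding pd_mat_def by auto

lemma S_Phi_S: "S * Phi * S = 1\<^sub>m q"
proof -
  have "S * (S * Phi) = 1\<^sub>m q"
    using S_S_Phi assoc_mult_mat[OF S_carrier S_carrier Phi_carrier] by simp
  thus ?thesis using mat_mult_left_right_inverse[OF S_carrier] S_carrier Phi_carrier by simp
qed

lemma Phi_S_S: "Phi * S * S = 1\<^sub>m q"
  using arg_cong[OF S_S_Phi, of transpose_mat] transpose_mult_mult[OF S_carrier S_carrier Phi_carrier]
  by (simp add: S_symmetric Phi_symmetric)

lemma T_carrier: "T \<in> carrier_mat q q"
  unfolding T_op_def using S_carrier Psi_carrier by simp

lemma T_symmetric: "T\<^sup>T = T"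
  unfolding T_op_def using transpose_mult_mult[OF S_carrier Psi_carrier S_carrier] S_symmetric Psi_symmetric
  by simp

lemma eigenvalue_T_bounds:
  assumes "eigenvalue T r"
  shows "-1 \<le> r \<and> r \<le> real K * (real K - 1)"
proof -
  obtain v where v: "eigenvector (S * Psi * S) v r" using assms unfolding eigenvalue_def T_op_def by blast
  have vc: "v \<in> carrier_vec q" "v \<noteq> 0\<^sub>v q" using v T_carrier unfolding eigenvector_def T_op_def by auto
  define w where "w = S *\<^sub>v v"
  have w: "w \<in> carrier_vec q" unfolding w_def using S_carrier vc by simp
  have Phi_w: "w \<bullet> (Phi *\<^sub>v w) = v \<bullet> v" and Psi_w: "w \<bullet> (Psi *\<^sub>v w) = r * (v \<bullet> v)"
    unfolding w_def
    by (rule congruence_eigenvector_quadratic_forms[OF S_carrier S_symmetric Phi_carrier Psi_carrier S_Phi_S v])+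
  have pos: "0 < v \<bullet> v" by (rule scalar_prod_self_pos[OF vc])
  have "0 \<le> (1 + r) * (v \<bullet> v)" and "(1 + r) * (v \<bullet> v) \<le> real K * (v \<bullet> v)"
    using quadratic_form_bounds[OF w] unfolding Phi_w Psi_w by (simp_all add: algebra_simps)
  hence "-1 \<le> r" "r \<le> real K - 1" using pos by (simp_all add: zero_le_mult_iff mult_le_cancel_right)
  moreover have "real K - 1 \<le> real K * (real K - 1)"
    using zero_le_square[of "real K - 1"] by (simp add: algebra_simps)
  ultimately show ?thesis by simp
qed

lemma Psi_index:
  assumes k: "k \<in> {1..K}" and l: "l \<in> {1..K}" and i: "i < d k" and j: "j < d l"
  shows "Psi $$ (blk_offset d k + i, blk_offset d l + j) = (if k = l then 0 else V k l $$ (i, j))"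
proof -
  have "Psi $$ (blk_offset d k + i, blk_offset d l + j)
      = (\<Sum>a\<in>{1..K}. \<Sum>b\<in>{1..K} - {a}. if a = k \<and> b = l then V a b $$ (i, j) else 0)"
    unfolding Psi_op_def using blk_index_less_qdim[where d = d, OF k i] blk_index_less_qdim[where d = d, OF l j]
    by (simp add: msum_index tau_transpose_mult_mult_index[OF _ _ k l i j] covop_carrier)
  also have "\<dots> = (\<Sum>a\<in>{1..K}. if a = k then (\<Sum>b\<in>{1..K} - {a}. if b = l then V k l $$ (i, j) else 0) else 0)"
    by (intro sum.cong refl) auto
  also have "\<dots> = (\<Sum>b\<in>{1..K} - {k}. if b = l then V k l $$ (i, j) else 0)" using k by simp
  finally show ?thesis using l by simp
qed

lemma Psi_eq_zero_iff:
  "Psi = 0\<^sub>m q q \<longleftrightarrow> (\<forall>k\<in>{1..K}. \<forall>l\<in>{1..K}. k \<noteq> l \<longrightarrow> V k l = 0\<^sub>m (d k) (d l))"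
proof
  assume Psi0: "Psi = 0\<^sub>m q q"
  show "\<forall>k\<in>{1..K}. \<forall>l\<in>{1..K}. k \<noteq> l \<longrightarrow> V k l = 0\<^sub>m (d k) (d l)"
  proof (intro ballI impI eq_matI)
    fix k l i j assume k: "k \<in> {1..K}" and l: "l \<in> {1..K}" and "k \<noteq> l"
      and "i < dim_row (0\<^sub>m (d k) (d l) :: real mat)" "j < dim_col (0\<^sub>m (d k) (d l) :: real mat)"
    hence i: "i < d k" and j: "j < d l" by auto
    have "V k l $$ (i, j) = Psi $$ (blk_offset d k + i, blk_offset d l + j)"
      using Psi_index[OF k l i j] \<open>k \<noteq> l\<close> by simp
    also have "\<dots> = 0"
      unfolding Psi0 using blk_index_less_qdim[where d = d, OF k i] blk_index_less_qdim[where d = d, OF l j] by simp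
    finally show "V k l $$ (i, j) = 0\<^sub>m (d k) (d l) $$ (i, j)" using i j by simp
  qed (simp_all add: covop_def)
next
  assume zero: "\<forall>k\<in>{1..K}. \<forall>l\<in>{1..K}. k \<noteq> l \<longrightarrow> V k l = 0\<^sub>m (d k) (d l)"
  have "(\<tau> k)\<^sup>T * V k l * \<tau> l = 0\<^sub>m q q" if "k \<in> {1..K}" "l \<in> {1..K} - {k}" for k l
  proof -
    have "V k l = 0\<^sub>m (d k) (d l)" using zero that by auto
    moreover have "(\<tau> k)\<^sup>T \<in> carrier_mat q (d k)" "\<tau> l \<in> carrier_mat (d l) q"
      using tau_carrier[of d K] by auto
    ultimately show ?thesis by (simp add: right_mult_zero_mat left_mult_zero_mat)
  qed
  hence "Psi = msum q q (\<lambda>k. msum q q (\<lambda>l. 0\<^sub>m q q) ({1..K} - {k})) {1..K}"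
    unfolding Psi_op_def by (intro msum_cong) auto
  thus "Psi = 0\<^sub>m q q" by (simp only: msum_zero)
qed

lemma T_eq_zero_iff: "T = 0\<^sub>m q q \<longleftrightarrow> Psi = 0\<^sub>m q q"
proof
  assume T0: "T = 0\<^sub>m q q"
  have "Psi = (Phi * S * S) * Psi * (S * S * Phi)"
    unfolding Phi_S_S S_S_Phi using Psi_carrier by simp
  also have "\<dots> = Phi * S * T * S * Phi"
    unfolding T_op_def using S_carrier Psi_carrier Phi_carrier by (simp add: assoc_mult_mat[of _ q q _ q _ q])
  finally show "Psi = 0\<^sub>m q q" unfolding T0 using S_carrier Phi_carrier by simp
qed (simp add: T_op_def right_mult_zero_mat[OF S_carrier] left_mult_zero_mat[OF S_carrier])

end

theorem theorem2p2:
  fixes M :: "'a measure" and X :: "nat \<Rightarrow> 'a \<Rightarrow> nat \<Rightarrow> real"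
    and d :: "nat \<Rightarrow> nat" and K :: nat
  assumes "prob_space M"
    and "K \<ge> 2"
    and meas: "\<And>k i. k \<in> {1..K} \<Longrightarrow> i < d k \<Longrightarrow> (\<lambda>\<omega>. X k \<omega> i) \<in> borel_measurable M"
    and sq: "\<And>k. k \<in> {1..K} \<Longrightarrow> integrable M (\<lambda>\<omega>. \<Sum>i<d k. (X k \<omega> i)\<^sup>2)"
    and centered: "\<And>k i. k \<in> {1..K} \<Longrightarrow> i < d k \<Longrightarrow> prob_space.expectation M (\<lambda>\<omega>. X k \<omega> i) = 0"
    and inv: "\<And>k. k \<in> {1..K} \<Longrightarrow> invertible_mat (covop M X d k k)"
  shows "(\<forall>\<rho>. eigenvalue (T_op M X d K) \<rho> \<longrightarrow> -1 \<le> \<rho> \<and> \<rho> \<le> real K * (real K - 1))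
    \<and> ((\<forall>\<rho>. eigenvalue (T_op M X d K) \<rho> \<longrightarrow> \<rho> = 0) \<longleftrightarrow>
         (\<forall>k\<in>{1..K}. \<forall>l\<in>{1..K}. k \<noteq> l \<longrightarrow> covop M X d k l = 0\<^sub>m (d k) (d l)))"
proof -
  interpret mlca M X d K using meas sq inv by unfold_locales
  have "(\<forall>\<rho>. eigenvalue T \<rho> \<longrightarrow> \<rho> = 0) \<longleftrightarrow> (\<forall>k\<in>{1..K}. \<forall>l\<in>{1..K}. k \<noteq> l \<longrightarrow> V k l = 0\<^sub>m (d k) (d l))"
    unfolding symmetric_mat_eq_zero_iff_eigenvalues_zero[OF T_carrier T_symmetric, symmetric]
      T_eq_zero_iff Psi_eq_zero_iff ..
  with eigenvalue_T_bounds show ?thesis by blast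
qed

end
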